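(* Let $G$ be an abelian, second countable, locally compact group with Haar measure $\mu$, let $K\subset G$ be a Borel set which is a semigroup, and assume there is a F\o lner sequence $(\Lambda_n)$ in $G$ with $\Lambda_n\subset K$ for all $n$. Let $\Sigma$ be the $\sigma$-algebra of Borel subsets of $G$ contained in $K$, and let $E\in\Sigma$ be relatively dense in $K$. Then: (1) There exist $r\in\mathbb{N}$ and $g_1,\dots,g_r\in K$ such that for each $B\in\Sigma$ with $\mu(B)<\infty$ there is $j\in\{1,\dots,r\}$ with $\mu((Bg_j)\cap E)\ge\mu(B)/r$. (2) $E$ has positive lower density relative to some F\o lner sequence $(\Lambda'_n)$ in $G$ with $\Lambda'_n\subset K$ for all $n$. (3) If $f:K\to\mathbb{R}$ is $\Sigma$-measurable with $f\ge0$ and $f(g)\ge\alpha$ for some $\alpha>0$ and all $g\in E$, then there exists a F\o lner sequence $(\Lambda'_n)$ in $G$ with $\Lambda'_n\subset K$ for all $n$ such that $\liminf_{n\to\infty}\frac{1}{\mu(\Lambda'_n)}\int_{\Lambda'_n}f\,d\mu>0$.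
   Context: A F\o lner sequence in $G$ is a sequence $(\Lambda_n)$ of compact subsets with $\mu(\Lambda_n)>0$ and $\lim_n\mu(\Lambda_n\,\Delta\,(\Lambda_ng))/\mu(\Lambda_n)=0$ for all $g\in G$. A set $E\subset K$ is relatively dense in $K$ if there exist $r\in\mathbb{N}$ and $g_1,\dots,g_r\in K$ with $E\cap\{gg_1,\dots,gg_r\}\neq\varnothing$ for all $g\in K$. $Bg=\{bg:b\in B\}$. A set $V\in\Sigma$ has positive lower density relative to $(\Lambda'_n)$ if $\liminf_{n\to\infty}\mu(\Lambda'_n\cap V)/\mu(\Lambda'_n)>0$. *)

theory Defs
  imports "HOL-Analysis.Analysis"
begin

text \<open>The abelian group G is written additively: the product b g of the paper is b + g.\<close>

definition haar_measure :: "'a::topological_ab_group_add measure \<Rightarrow> bool" where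
  "haar_measure \<mu> \<longleftrightarrow>
     sets \<mu> = sets borel \<and>
     (\<forall>A\<in>sets borel. \<forall>g. emeasure \<mu> ((\<lambda>b. b + g) ` A) = emeasure \<mu> A) \<and>
     (\<forall>C. compact C \<longrightarrow> emeasure \<mu> C < \<infinity>) \<and>
     (\<forall>U. open U \<and> U \<noteq> {} \<longrightarrow> emeasure \<mu> U > 0) \<and>
     (\<forall>A\<in>sets borel. emeasure \<mu> A = (INF U\<in>{U. open U \<and> A \<subseteq> U}. emeasure \<mu> U)) \<and>
     (\<forall>U. open U \<longrightarrow> emeasure \<mu> U = (SUP C\<in>{C. compact C \<and> C \<subseteq> U}. emeasure \<mu> C))"

definition folner_seq :: "'a::topological_ab_group_add measure \<Rightarrow> (nat \<Rightarrow> 'a set) \<Rightarrow> bool" where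
  "folner_seq \<mu> \<Lambda> \<longleftrightarrow>
     (\<forall>n. compact (\<Lambda> n) \<and> measure \<mu> (\<Lambda> n) > 0) \<and>
     (\<forall>g. (\<lambda>n. measure \<mu> ((\<Lambda> n - (\<lambda>b. b + g) ` \<Lambda> n) \<union> ((\<lambda>b. b + g) ` \<Lambda> n - \<Lambda> n)) / measure \<mu> (\<Lambda> n))
            \<longlonglongrightarrow> 0)"

definition rel_dense_in :: "'a::plus set \<Rightarrow> 'a set \<Rightarrow> bool" where
  "rel_dense_in E K \<longleftrightarrow>
     (\<exists>(r::nat) (gs::nat \<Rightarrow> 'a). (\<forall>i\<in>{1..r}. gs i \<in> K) \<and>
        (\<forall>g\<in>K. E \<inter> {g + gs i | i. i \<in> {1..r}} \<noteq> {}))"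

end

theory Submission
  imports Defs
begin

text \<open>Relative density gives finitely many translates \<open>g\<^sub>1, \<dots>, g\<^sub>r\<close> such that every point of \<open>K\<close>
  is moved into \<open>E\<close> by one of them. Hence each \<open>B \<subseteq> K\<close> is covered by the \<open>r\<close> sets
  \<open>B \<inter> (E - g\<^sub>i)\<close>, and by translation invariance one of the \<open>B + g\<^sub>j \<inter> E\<close> carries at least
  \<open>\<mu>(B)/r\<close>. Applying this to each \<open>\<Lambda>\<^sub>n\<close> and translating \<open>\<Lambda>\<^sub>n\<close> by the good \<open>g\<^sub>j\<close> keeps the
  Foelner property (translates of a Foelner sequence are Foelner in an abelian group) and,
  as \<open>K\<close> is a semigroup, keeps the sets inside \<open>K\<close>; the new sequence meets \<open>E\<close> with relative
  measure at least \<open>1/r\<close> throughout, which gives (2), and (3) follows since \<open>f \<ge> \<alpha>\<close> on \<open>E\<close>.\<close>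

lemma translate_eq_vimage:
  fixes g :: "'a::ab_group_add"
  shows "(\<lambda>b. b + g) ` A = (\<lambda>b. b - g) -` A"
  by (auto simp: image_iff) (metis diff_add_cancel)

lemma sets_borel_translate:
  fixes g :: "'a::topological_ab_group_add"
  assumes "A \<in> sets borel"
  shows "(\<lambda>b. b + g) ` A \<in> sets borel"
proof -
  have "(\<lambda>b. b - g) \<in> borel_measurable borel"
    by (intro borel_measurable_continuous_onI continuous_intros)
  from measurable_sets[OF this assms] show ?thesis
    by (simp add: translate_eq_vimage)
qed

lemma haar_measure_sets: "haar_measure \<mu> \<Longrightarrow> sets \<mu> = sets borel"
  unfolding haar_measure_def by simp

lemma haar_measure_compact_finite: "haar_measure \<mu> \<Longrightarrow> compact C \<Longrightarrow> emeasure \<mu> C < \<infinity>"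
  unfolding haar_measure_def by simp

lemma haar_emeasure_translate:
  "haar_measure \<mu> \<Longrightarrow> A \<in> sets borel \<Longrightarrow> emeasure \<mu> ((\<lambda>b. b + g) ` A) = emeasure \<mu> A"
  unfolding haar_measure_def by simp

lemma haar_measure_translate:
  "haar_measure \<mu> \<Longrightarrow> A \<in> sets borel \<Longrightarrow> measure \<mu> ((\<lambda>b. b + g) ` A) = measure \<mu> A"
  by (simp add: measure_def haar_emeasure_translate)

lemma folner_seq_sets_borel:
  fixes \<mu> :: "'a::{topological_ab_group_add, t2_space} measure"
  shows "folner_seq \<mu> \<Lambda> \<Longrightarrow> \<Lambda> n \<in> sets borel"
  by (simp add: folner_seq_def compact_imp_closed borel_closed)

lemma symdiff_translate_translate:
  fixes g h :: "'a::ab_group_add"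
  defines "\<tau> c \<equiv> (\<lambda>b. b + c)"
  shows "(\<tau> h ` L - \<tau> g ` \<tau> h ` L) \<union> (\<tau> g ` \<tau> h ` L - \<tau> h ` L)
     = \<tau> h ` ((L - \<tau> g ` L) \<union> (\<tau> g ` L - L))"
proof -
  have "inj (\<tau> h)" by (simp add: \<tau>_def inj_def)
  moreover have "\<tau> g ` \<tau> h ` L = \<tau> h ` \<tau> g ` L"
    by (simp add: \<tau>_def image_image algebra_simps)
  ultimately show ?thesis by (simp add: image_Un image_set_diff)
qed

lemma folner_seq_translate:
  fixes \<mu> :: "'a::{topological_ab_group_add, t2_space} measure"
  assumes haar: "haar_measure \<mu>" and F: "folner_seq \<mu> \<Lambda>"
  shows "folner_seq \<mu> (\<lambda>n. (\<lambda>b. b + h n) ` \<Lambda> n)"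
proof -
  have cpt: "compact (\<Lambda> n)" and pos: "measure \<mu> (\<Lambda> n) > 0" for n
    using F unfolding folner_seq_def by auto
  have bor: "\<Lambda> n \<in> sets borel" for n
    using folner_seq_sets_borel[OF F] .
  have symdiff_bor: "(\<Lambda> n - (\<lambda>b. b + g) ` \<Lambda> n) \<union> ((\<lambda>b. b + g) ` \<Lambda> n - \<Lambda> n) \<in> sets borel" for n g
    using bor sets_borel_translate[OF bor] by auto
  have "compact ((\<lambda>b. b + h n) ` \<Lambda> n)" for n
    by (intro compact_continuous_image cpt continuous_intros)
  moreover note haar_measure_translate[OF haar bor] haar_measure_translate[OF haar symdiff_bor]
  ultimately show ?thesis
    using F pos unfolding folner_seq_def symdiff_translate_translate by simp
qed

lemma exists_ge_average:
  fixes a :: "nat \<Rightarrow> real"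
  assumes "r \<ge> 1" and "x \<le> (\<Sum>i\<in>{1..r}. a i)"
  shows "\<exists>j\<in>{1..r}. a j \<ge> x / real r"
proof (rule ccontr)
  assume "\<not> ?thesis"
  then have "(\<Sum>i\<in>{1..r}. a i) < (\<Sum>i\<in>{1..r}. x / real r)"
    using assms(1) by (intro sum_strict_mono) (auto simp: not_le)
  also have "\<dots> = x" using assms(1) by simp
  finally show False using assms(2) by simp
qed

lemma rel_dense_in_translate_large:
  fixes \<mu> :: "'a::{topological_ab_group_add, t2_space} measure"
  assumes haar: "haar_measure \<mu>" and "K \<noteq> {}"
    and E_borel: "E \<in> sets borel" and "rel_dense_in E K"
  obtains r gs where "r \<ge> 1" "\<forall>i\<in>{1..r}. gs i \<in> K"
    "\<And>B. B \<in> sets borel \<Longrightarrow> B \<subseteq> K \<Longrightarrow>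
       \<exists>j\<in>{1..r}. measure \<mu> ((\<lambda>b. b + gs j) ` B \<inter> E) \<ge> measure \<mu> B / real r"
proof -
  obtain r :: nat and gs where gsK: "\<forall>i\<in>{1..r}. gs i \<in> K"
    and cover: "\<forall>g\<in>K. E \<inter> {g + gs i | i. i \<in> {1..r}} \<noteq> {}"
    using \<open>rel_dense_in E K\<close> unfolding rel_dense_in_def by blast
  have r: "r \<ge> 1" using cover \<open>K \<noteq> {}\<close> by fastforce
  have "\<exists>j\<in>{1..r}. measure \<mu> ((\<lambda>b. b + gs j) ` B \<inter> E) \<ge> measure \<mu> B / real r"
    if B: "B \<in> sets borel" "B \<subseteq> K" for B
  proof -
    define D where "D i = B \<inter> (\<lambda>b. b + (- gs i)) ` E" for i
    have D_borel: "D i \<in> sets borel" for i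
      unfolding D_def by (intro sets.Int B(1) sets_borel_translate E_borel)
    have translate_D: "(\<lambda>b. b + gs i) ` D i = (\<lambda>b. b + gs i) ` B \<inter> E" for i
      unfolding D_def translate_eq_vimage by auto
    have "B = (\<Union>i\<in>{1..r}. D i)"
      using B(2) cover unfolding D_def translate_eq_vimage by fastforce
    then have "measure \<mu> B \<le> (\<Sum>i\<in>{1..r}. measure \<mu> (D i))"
      using D_borel haar_measure_sets[OF haar] by (simp add: measure_UNION_le)
    also have "\<dots> = (\<Sum>i\<in>{1..r}. measure \<mu> ((\<lambda>b. b + gs i) ` B \<inter> E))"
      by (simp add: translate_D[symmetric] haar_measure_translate[OF haar D_borel])
    finally show ?thesis using exists_ge_average[OF r] by blast
  qed
  with that r gsK show thesis by blast
qed

lemma folner_seq_density_lower_bound: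
  fixes \<mu> :: "'a::{topological_ab_group_add, t2_space} measure"
  assumes haar: "haar_measure \<mu>"
    and K_semigroup: "\<forall>x\<in>K. \<forall>y\<in>K. x + y \<in> K"
    and F: "folner_seq \<mu> \<Lambda>" and \<Lambda>K: "\<forall>n. \<Lambda> n \<subseteq> K"
    and E_borel: "E \<in> sets borel" and E_dense: "rel_dense_in E K"
  obtains \<Lambda>' c where "folner_seq \<mu> \<Lambda>'" "\<forall>n. \<Lambda>' n \<subseteq> K" "c > 0"
    "\<And>n. ennreal c \<le> emeasure \<mu> (\<Lambda>' n \<inter> E) / emeasure \<mu> (\<Lambda>' n)"
proof -
  have pos: "measure \<mu> (\<Lambda> n) > 0" and bor: "\<Lambda> n \<in> sets borel" for n
    using F folner_seq_sets_borel[OF F] by (auto simp: folner_seq_def)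
  then have "K \<noteq> {}" using \<Lambda>K by force
  obtain r gs where r: "r \<ge> 1" and gsK: "\<forall>i\<in>{1..r}. gs i \<in> K"
    and large: "\<And>B. B \<in> sets borel \<Longrightarrow> B \<subseteq> K \<Longrightarrow>
       \<exists>j\<in>{1..r}. measure \<mu> ((\<lambda>b. b + gs j) ` B \<inter> E) \<ge> measure \<mu> B / real r"
    using rel_dense_in_translate_large[OF haar \<open>K \<noteq> {}\<close> E_borel E_dense] by blast
  obtain j where j: "\<And>n. j n \<in> {1..r}"
    and j_large: "\<And>n. measure \<mu> ((\<lambda>b. b + gs (j n)) ` \<Lambda> n \<inter> E) \<ge> measure \<mu> (\<Lambda> n) / real r"
    using large[OF bor \<Lambda>K[rule_format]] by metis
  define L where "L n = (\<lambda>b. b + gs (j n)) ` \<Lambda> n" for n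
  have FL: "folner_seq \<mu> L"
    unfolding L_def by (rule folner_seq_translate[OF haar F])
  have LK: "\<forall>n. L n \<subseteq> K"
    unfolding L_def using \<Lambda>K gsK j K_semigroup by blast
  have measure_L: "measure \<mu> (L n) = measure \<mu> (\<Lambda> n)" for n
    unfolding L_def by (rule haar_measure_translate[OF haar bor])
  have L_borel: "L n \<in> sets borel" for n
    unfolding L_def by (rule sets_borel_translate[OF bor])
  have finite_L: "emeasure \<mu> (L n) < \<infinity>" for n
    using FL haar_measure_compact_finite[OF haar] by (simp add: folner_seq_def)
  have finite_LE: "emeasure \<mu> (L n \<inter> E) < \<infinity>" for n
  proof -
    have "emeasure \<mu> (L n \<inter> E) \<le> emeasure \<mu> (L n)"
      using L_borel haar_measure_sets[OF haar] by (intro emeasure_mono) auto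
    with finite_L[of n] show ?thesis by order
  qed
  have "ennreal (1 / real r) \<le> emeasure \<mu> (L n \<inter> E) / emeasure \<mu> (L n)" for n
  proof -
    have "measure \<mu> (L n) / real r \<le> measure \<mu> (L n \<inter> E)"
      using j_large[of n] measure_L[of n] by (simp add: L_def)
    then have "1 / real r \<le> measure \<mu> (L n \<inter> E) / measure \<mu> (L n)"
      using pos[of n] r by (simp add: measure_L field_simps)
    then show ?thesis
      using pos[of n] finite_L[of n] finite_LE[of n]
      by (simp add: emeasure_eq_ennreal_measure measure_L divide_ennreal)
  qed
  moreover have "1 / real r > 0" using r by simp
  ultimately show thesis using that FL LK by blast
qed

lemma nn_integral_density_ratio_ge:
  assumes sets: "sets \<mu> = sets borel" and "L \<in> sets borel" "E \<in> sets borel"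
    and "\<alpha> \<ge> 0" "\<forall>x\<in>L. f x \<ge> 0" "\<forall>x\<in>E. f x \<ge> \<alpha>"
  shows "ennreal \<alpha> * (emeasure \<mu> (L \<inter> E) / emeasure \<mu> L)
    \<le> (\<integral>\<^sup>+ x\<in>L. ennreal (f x) \<partial>\<mu>) / emeasure \<mu> L"
proof -
  have "ennreal \<alpha> * emeasure \<mu> (L \<inter> E) = (\<integral>\<^sup>+ x. ennreal \<alpha> * indicator (L \<inter> E) x \<partial>\<mu>)"
    using assms(2,3) sets by (simp add: nn_integral_cmult_indicator)
  also have "\<dots> \<le> (\<integral>\<^sup>+ x\<in>L. ennreal (f x) \<partial>\<mu>)"
    by (intro nn_integral_mono) (use assms in \<open>auto split: split_indicator intro: ennreal_leI\<close>)
  finally show ?thesis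
    by (simp add: ennreal_times_divide divide_right_mono_ennreal)
qed

lemma liminf_pos_if_uniform_lower_bound:
  fixes X :: "nat \<Rightarrow> 'a::{complete_linorder, zero}"
  assumes "0 < c" "\<And>n. c \<le> X n"
  shows "0 < liminf X"
proof -
  have "c \<le> liminf X" by (rule Liminf_bounded) (simp add: assms(2))
  with assms(1) show ?thesis by order
qed

theorem lemma5p12:
  fixes \<mu> :: "'a::{topological_ab_group_add, second_countable_topology, t2_space} measure"
    and K E :: "'a set"
  assumes lc: "locally_compact_space (euclidean :: 'a topology)"
    and haar: "haar_measure \<mu>"
    and K_borel: "K \<in> sets borel"
    and K_semigroup: "\<forall>x\<in>K. \<forall>y\<in>K. x + y \<in> K"
    and folner_ex: "\<exists>\<Lambda>. folner_seq \<mu> \<Lambda> \<and> (\<forall>n. \<Lambda> n \<subseteq> K)"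
    and E_Sigma: "E \<in> sets borel" "E \<subseteq> K"
    and E_dense: "rel_dense_in E K"
  shows
    "(\<exists>(r::nat) (gs::nat \<Rightarrow> 'a). (\<forall>i\<in>{1..r}. gs i \<in> K) \<and>
        (\<forall>B. B \<in> sets borel \<and> B \<subseteq> K \<and> emeasure \<mu> B < \<infinity> \<longrightarrow>
           (\<exists>j\<in>{1..r}. measure \<mu> (((\<lambda>b. b + gs j) ` B) \<inter> E) \<ge> measure \<mu> B / real r)))
     \<and> (\<exists>\<Lambda>'. folner_seq \<mu> \<Lambda>' \<and> (\<forall>n. \<Lambda>' n \<subseteq> K) \<and>
          liminf (\<lambda>n. emeasure \<mu> (\<Lambda>' n \<inter> E) / emeasure \<mu> (\<Lambda>' n)) > 0)
     \<and> (\<forall>(f::'a \<Rightarrow> real) (\<alpha>::real).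
          f \<in> borel_measurable (restrict_space borel K) \<and> (\<forall>g\<in>K. f g \<ge> 0) \<and>
          \<alpha> > 0 \<and> (\<forall>g\<in>E. f g \<ge> \<alpha>) \<longrightarrow>
          (\<exists>\<Lambda>'. folner_seq \<mu> \<Lambda>' \<and> (\<forall>n. \<Lambda>' n \<subseteq> K) \<and>
             liminf (\<lambda>n. (\<integral>\<^sup>+ x\<in>\<Lambda>' n. ennreal (f x) \<partial>\<mu>) / emeasure \<mu> (\<Lambda>' n)) > 0))"
proof -
  obtain \<Lambda> where F: "folner_seq \<mu> \<Lambda>" and \<Lambda>K: "\<forall>n. \<Lambda> n \<subseteq> K"
    using folner_ex by blast
  obtain \<Lambda>' c where F': "folner_seq \<mu> \<Lambda>'" and \<Lambda>'K: "\<forall>n. \<Lambda>' n \<subseteq> K" and "c > 0"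
    and density: "\<And>n. ennreal c \<le> emeasure \<mu> (\<Lambda>' n \<inter> E) / emeasure \<mu> (\<Lambda>' n)"
    using folner_seq_density_lower_bound[OF haar K_semigroup F \<Lambda>K E_Sigma(1) E_dense] by blast
  have "K \<noteq> {}" using F' \<Lambda>'K by (force simp: folner_seq_def)
  from rel_dense_in_translate_large[OF haar \<open>K \<noteq> {}\<close> E_Sigma(1) E_dense]
  have "\<exists>r gs. (\<forall>i\<in>{1..r}. gs i \<in> K) \<and> (\<forall>B. B \<in> sets borel \<and> B \<subseteq> K \<and> emeasure \<mu> B < \<infinity> \<longrightarrow>
           (\<exists>j\<in>{1..r}. measure \<mu> ((\<lambda>b. b + gs j) ` B \<inter> E) \<ge> measure \<mu> B / real r))"
    by metis
  moreover have "liminf (\<lambda>n. emeasure \<mu> (\<Lambda>' n \<inter> E) / emeasure \<mu> (\<Lambda>' n)) > 0"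
    using \<open>c > 0\<close> density by (intro liminf_pos_if_uniform_lower_bound) auto
  moreover have "liminf (\<lambda>n. (\<integral>\<^sup>+ x\<in>\<Lambda>' n. ennreal (f x) \<partial>\<mu>) / emeasure \<mu> (\<Lambda>' n)) > 0"
    if "\<forall>g\<in>K. f g \<ge> 0" "\<alpha> > 0" "\<forall>g\<in>E. f g \<ge> \<alpha>" for f :: "'a \<Rightarrow> real" and \<alpha>
  proof (rule liminf_pos_if_uniform_lower_bound)
    show "0 < ennreal \<alpha> * ennreal c" using \<open>\<alpha> > 0\<close> \<open>c > 0\<close> by (simp flip: ennreal_mult)
    show "ennreal \<alpha> * ennreal c \<le> (\<integral>\<^sup>+ x\<in>\<Lambda>' n. ennreal (f x) \<partial>\<mu>) / emeasure \<mu> (\<Lambda>' n)" for n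
      using mult_left_mono[OF density[of n], of "ennreal \<alpha>"] that \<Lambda>'K
        nn_integral_density_ratio_ge[OF haar_measure_sets[OF haar] folner_seq_sets_borel[OF F', of n]
          E_Sigma(1), of \<alpha> f]
      by force
  qed
  ultimately show ?thesis using F' \<Lambda>'K by blast
qed

end
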